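(* Let $\mathbf D:\mathbb{R}^{d\times N}\to\mathbb{R}^{d\times N}$ be a $C^1$ map with $\mathbf D(\mathbf T)\cdot\mathbf T\ge C_1|\mathbf T|-C_0$ for all $\mathbf T$ (some $C_0\ge0$, $C_1>0$), and such that $\mathcal A_{i\nu j\mu}(\mathbf T)=\partial\mathbf D_{i\nu}(\mathbf T)/\partial\mathbf T_{j\mu}$ satisfies $h(|\mathbf T|)|\mathbf B|^2\le\sum_{i,j,\nu,\mu}\mathcal A_{i\nu j\mu}(\mathbf T)\mathbf B_{i\nu}\mathbf B_{j\mu}\le C_2|\mathbf B|^2/(1+|\mathbf T|)$ for all $\mathbf T,\mathbf B$, for some $C_2>0$ and a positive nonincreasing continuous $h:\mathbb{R}_+\to\mathbb{R}_+$. Then for all $\mathbf T_1,\mathbf T_2\in\mathbb{R}^{d\times N}$, $$(\mathbf D(\mathbf T_1)-\mathbf D(\mathbf T_2))\cdot(\mathbf T_1-\mathbf T_2)\ge h(|\mathbf T_1|+|\mathbf T_2|)\,|\mathbf T_1-\mathbf T_2|^2,$$ and the set $\overline{\mathbf D(\mathbb{R}^{d\times N})}$ is convex. If in addition $\mathcal A$ is symmetric ($\mathcal A_{i\nu j\mu}=\mathcal A_{j\mu i\nu}$), then $F(\mathbf T)=\int_0^1\mathbf D(t\mathbf T)\cdot\mathbf T\,dt$ satisfies $\partial F(\mathbf T)/\partial\mathbf T_{i\nu}=\mathbf D_{i\nu}(\mathbf T)$ and is strictly convex; furthermore $F^*(\mathbf B)=\sup_{\mathbf T}\{\mathbf B\cdot\mathbf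 T-F(\mathbf T)\}$ is strictly convex on $\mathbf D(\mathbb{R}^{d\times N})$, satisfies $F^*(\mathbf B)=\infty$ if $\mathbf B\notin\overline{\mathbf D(\mathbb{R}^{d\times N})}$ and $F^*(\mathbf B)=\mathbf B\cdot\mathbf D^{-1}(\mathbf B)-F(\mathbf D^{-1}(\mathbf B))$ if $\mathbf B\in\mathbf D(\mathbb{R}^{d\times N})$, and $\partial F^*(\mathbf B)/\partial\mathbf B=\mathbf D^{-1}(\mathbf B)$ for $\mathbf B\in\mathbf D(\mathbb{R}^{d\times N})$.
   Context: $\mathbf A\cdot\mathbf B=\sum_{i,\nu}\mathbf A_{i\nu}\mathbf B_{i\nu}$ and $|\cdot|$ is the Euclidean norm on $\mathbb{R}^{d\times N}$. $\mathbf D^{-1}$ denotes the inverse of $\mathbf D$ on its range $\mathbf D(\mathbb{R}^{d\times N})$. *)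

theory Defs
  imports "HOL-Analysis.Analysis"
begin

text \<open>Matrices in R^(d x N) are modelled as real^'N^'d; entry (i,nu) is T$i$nu.
  The inner product of vec types is the Frobenius product A . B = sum A_(i nu) B_(i nu),
  and norm is the Euclidean (Frobenius) norm.\<close>

definition ematrix :: "'d::finite \<Rightarrow> 'N::finite \<Rightarrow> real^'N^'d" where
  "ematrix j \<mu> = axis j (axis \<mu> 1)"

definition pdA :: "(real^'N^'d \<Rightarrow> real^'N^'d) \<Rightarrow> 'd::finite \<Rightarrow> 'N::finite \<Rightarrow> 'd \<Rightarrow> 'N \<Rightarrow> real^'N^'d \<Rightarrow> real" where
  "pdA D i \<nu> j \<mu> T = (frechet_derivative D (at T) (ematrix j \<mu>)) $ i $ \<nu>"

definition C1_map :: "('a::euclidean_space \<Rightarrow> 'b::euclidean_space) \<Rightarrow> bool" where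
  "C1_map f \<longleftrightarrow> (\<exists>f'. (\<forall>x. (f has_derivative blinfun_apply (f' x)) (at x)) \<and> continuous_on UNIV f')"

definition potF :: "(real^'N^'d \<Rightarrow> real^'N^'d) \<Rightarrow> real^'N::finite^'d::finite \<Rightarrow> real" where
  "potF D T = integral {0..1} (\<lambda>t. D (t *\<^sub>R T) \<bullet> T)"

definition conjF :: "(real^'N^'d \<Rightarrow> real) \<Rightarrow> real^'N::finite^'d::finite \<Rightarrow> ereal" where
  "conjF F B = (SUP T. ereal (B \<bullet> T - F T))"

definition strictly_convex_on :: "'a::real_vector set \<Rightarrow> ('a \<Rightarrow> real) \<Rightarrow> bool" where
  "strictly_convex_on S f \<longleftrightarrow> convex S \<and>
    (\<forall>x\<in>S. \<forall>y\<in>S. x \<noteq> y \<longrightarrow> (\<forall>u::real. 0 < u \<and> u < 1 \<longrightarrow>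
       f (u *\<^sub>R x + (1 - u) *\<^sub>R y) < u * f x + (1 - u) * f y))"

text \<open>Strict convexity of an extended-real valued function on a set S (S need not be convex).\<close>
definition strictly_convex_on_ereal :: "'a::real_vector set \<Rightarrow> ('a \<Rightarrow> ereal) \<Rightarrow> bool" where
  "strictly_convex_on_ereal S f \<longleftrightarrow>
    (\<forall>x\<in>S. \<forall>y\<in>S. x \<noteq> y \<longrightarrow> (\<forall>u::real. 0 < u \<and> u < 1 \<longrightarrow>
       f (u *\<^sub>R x + (1 - u) *\<^sub>R y) < ereal u * f x + ereal (1 - u) * f y))"

end

theory Submission
  imports Defs
begin

text \<open>Along the segment from \<open>T2\<close> to \<open>T1\<close> the derivative of \<open>D\<close> is elliptic with constant at
  least \<open>h (|T1| + |T2|)\<close>, so the mean value theorem gives strong monotonicity.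
  The range of a continuous monotone map on a Euclidean space has convex closure: \<open>D + e I\<close> is
  onto (invariance of domain plus an expansion estimate), and solving \<open>D T + e T = u D T1 + (1 - u) D T2\<close> gives \<open>e T \<longrightarrow> 0\<close>.
  If the derivative is symmetric, \<open>D\<close> is the gradient of the radial integral \<open>F\<close> (Leibniz rule and
  the fundamental theorem of calculus), so \<open>F\<close> is strictly convex and \<open>T\<close> maximises
  \<open>B \<bullet> T - F T\<close> exactly when \<open>D T = B\<close>. This evaluates \<open>F\<^sup>*\<close> on the range, where its derivative
  \<open>D\<^sup>-\<^sup>1\<close> comes from squeezing the remainder between the two first-order inequalities; off the closure
  of the range a separating hyperplane makes \<open>F\<^sup>*\<close> infinite. The range itself is convex because
  strong monotonicity makes \<open>F T - B \<bullet> T\<close> grow linearly, so it attains its minimum, at a zero of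
  \<open>D T - B\<close>.\<close>

lemma ematrix_nth: "ematrix j \<mu> $ i $ \<nu> = (if i = j then if \<nu> = \<mu> then 1 else 0 else 0)"
  by (simp add: ematrix_def axis_def)

lemma ematrix_expansion:
  fixes X :: "real^'N::finite^'d::finite"
  shows "X = (\<Sum>j\<in>UNIV. \<Sum>\<mu>\<in>UNIV. X $ j $ \<mu> *\<^sub>R ematrix j \<mu>)"
proof -
  have "(\<Sum>\<mu>\<in>UNIV. X $ j $ \<mu> * ematrix j \<mu> $ i $ \<nu>) = (if i = j then X $ j $ \<nu> else 0)"
    for i \<nu> j
    by (cases "i = j") (simp_all add: ematrix_nth if_distrib[where f="\<lambda>x. _ * x"] cong: if_cong)
  then show ?thesis by (simp add: vec_eq_iff)
qed

lemma linear_ematrix_expansion: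
  fixes X :: "real^'N::finite^'d::finite"
  assumes "linear L"
  shows "L X = (\<Sum>j\<in>UNIV. \<Sum>\<mu>\<in>UNIV. X $ j $ \<mu> *\<^sub>R L (ematrix j \<mu>))"
  by (subst ematrix_expansion) (simp add: linear_sum[OF assms] linear_scale[OF assms])

lemma quadratic_form_ematrix:
  fixes B :: "real^'N::finite^'d::finite"
  assumes "linear L"
  shows "(\<Sum>i\<in>UNIV. \<Sum>\<nu>\<in>UNIV. \<Sum>j\<in>UNIV. \<Sum>\<mu>\<in>UNIV. L (ematrix j \<mu>) $ i $ \<nu> * B $ i $ \<nu> * B $ j $ \<mu>)
     = B \<bullet> L B"
  by (simp add: inner_vec_def linear_ematrix_expansion[OF assms, of B] sum_distrib_left mult_ac)

lemma inner_symmetric_if_ematrix_symmetric: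
  fixes X Y :: "real^'N::finite^'d::finite"
  assumes "linear L"
    and sym: "\<And>i \<nu> j \<mu>. L (ematrix j \<mu>) $ i $ \<nu> = L (ematrix i \<nu>) $ j $ \<mu>"
  shows "L X \<bullet> Y = L Y \<bullet> X"
proof -
  have column: "L (ematrix j \<mu>) \<bullet> Y = L Y $ j $ \<mu>" for j \<mu>
  proof -
    have "L (ematrix j \<mu>) \<bullet> Y = (\<Sum>i\<in>UNIV. \<Sum>\<nu>\<in>UNIV. Y $ i $ \<nu> * L (ematrix i \<nu>) $ j $ \<mu>)"
      unfolding inner_vec_def inner_real_def by (simp add: sym mult.commute)
    then show ?thesis by (simp add: linear_ematrix_expansion[OF assms(1), of Y])
  qed
  have "L X \<bullet> Y = (\<Sum>j\<in>UNIV. \<Sum>\<mu>\<in>UNIV. X $ j $ \<mu> * (L (ematrix j \<mu>) \<bullet> Y))"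
    by (simp add: linear_ematrix_expansion[OF assms(1), of X] inner_sum_left)
  also have "\<dots> = X \<bullet> L Y"
    unfolding column by (simp add: inner_vec_def mult.commute)
  finally show ?thesis by (simp add: inner_commute)
qed

lemma pdA_eq_blinfun:
  assumes "(D has_derivative blinfun_apply L) (at T)"
  shows "pdA D i \<nu> j \<mu> T = L (ematrix j \<mu>) $ i $ \<nu>"
  using frechet_derivative_at[OF assms] by (simp add: pdA_def)

lemma quadratic_form_pdA:
  assumes "(D has_derivative blinfun_apply L) (at T)"
  shows "(\<Sum>i\<in>UNIV. \<Sum>\<nu>\<in>UNIV. \<Sum>j\<in>UNIV. \<Sum>\<mu>\<in>UNIV. pdA D i \<nu> j \<mu> T * B $ i $ \<nu> * B $ j $ \<mu>) = B \<bullet> L B"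
  by (simp add: pdA_eq_blinfun[OF assms] quadratic_form_ematrix bounded_linear.linear
      blinfun.bounded_linear_right)

lemma inner_symmetric_if_pdA_symmetric:
  assumes "(D has_derivative blinfun_apply L) (at T)"
    and "\<And>i \<nu> j \<mu>. pdA D i \<nu> j \<mu> T = pdA D j \<mu> i \<nu> T"
  shows "L X \<bullet> Y = L Y \<bullet> X"
  using assms(2) by (intro inner_symmetric_if_ematrix_symmetric)
    (simp_all add: pdA_eq_blinfun[OF assms(1)] bounded_linear.linear blinfun.bounded_linear_right)

lemma has_real_derivative_inner_along_line:
  assumes "(D has_derivative D') (at (X + t *\<^sub>R V))"
  shows "((\<lambda>s. D (X + s *\<^sub>R V) \<bullet> W) has_real_derivative D' V \<bullet> W) (at t within S)"
proof -
  have "((\<lambda>s. X + s *\<^sub>R V) has_derivative (\<lambda>s. s *\<^sub>R V)) (at t within S)"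
    by (auto intro!: derivative_eq_intros)
  from has_derivative_compose[OF this assms]
  have "((\<lambda>s. D (X + s *\<^sub>R V) \<bullet> W) has_derivative (\<lambda>s. D' (s *\<^sub>R V) \<bullet> W)) (at t within S)"
    by (auto intro!: derivative_eq_intros)
  moreover have "(\<lambda>s. D' (s *\<^sub>R V) \<bullet> W) = (*) (D' V \<bullet> W)"
    using linear_scale[OF has_derivative_linear[OF assms]] by auto
  ultimately show ?thesis
    by (simp add: has_field_derivative_def)
qed

lemma strongly_monotone_if_elliptic:
  fixes D :: "'a::real_inner \<Rightarrow> 'a"
  assumes der: "\<And>x. (D has_derivative D' x) (at x)"
    and ellip: "\<And>T B. h (norm T) * (norm B)\<^sup>2 \<le> B \<bullet> D' T B"
    and hmono: "\<And>s t. 0 \<le> s \<Longrightarrow> s \<le> t \<Longrightarrow> h t \<le> h s"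
  shows "h (norm T1 + norm T2) * (norm (T1 - T2))\<^sup>2 \<le> (D T1 - D T2) \<bullet> (T1 - T2)"
proof -
  define V where "V = T1 - T2"
  obtain z where z: "0 < z" "z < 1"
    and mvt: "D (T2 + 1 *\<^sub>R V) \<bullet> V - D (T2 + 0 *\<^sub>R V) \<bullet> V = (1 - 0) * (D' (T2 + z *\<^sub>R V) V \<bullet> V)"
    using MVT2[of 0 1 "\<lambda>t. D (T2 + t *\<^sub>R V) \<bullet> V" "\<lambda>t. D' (T2 + t *\<^sub>R V) V \<bullet> V"]
      has_real_derivative_inner_along_line[OF der] by fastforce
  have "norm (T2 + z *\<^sub>R V) = norm (z *\<^sub>R T1 + (1 - z) *\<^sub>R T2)"
    by (simp add: V_def algebra_simps)
  also have "\<dots> \<le> z * norm T1 + (1 - z) * norm T2"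
    using z norm_triangle_ineq[of "z *\<^sub>R T1" "(1 - z) *\<^sub>R T2"] by simp
  also have "\<dots> \<le> norm T1 + norm T2"
    using z mult_left_le_one_le[of "norm T1" z] mult_left_le_one_le[of "norm T2" "1 - z"] by simp
  finally have "h (norm T1 + norm T2) \<le> h (norm (T2 + z *\<^sub>R V))"
    by (intro hmono) auto
  then have "h (norm T1 + norm T2) * (norm V)\<^sup>2 \<le> h (norm (T2 + z *\<^sub>R V)) * (norm V)\<^sup>2"
    by (intro mult_right_mono) auto
  also have "\<dots> \<le> D' (T2 + z *\<^sub>R V) V \<bullet> V"
    using ellip by (simp add: inner_commute)
  finally show ?thesis
    using mvt by (simp add: V_def inner_diff_left)
qed

lemma closed_range_if_expanding:
  fixes E :: "'a::complete_space \<Rightarrow> 'b::metric_space"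
  assumes cont: "continuous_on UNIV E" and "e > 0"
    and expanding: "\<And>x y. e * dist x y \<le> dist (E x) (E y)"
  shows "closed (range E)"
  unfolding closed_sequential_limits
proof clarify
  fix x l assume range: "\<forall>n. x n \<in> range E" and lim: "x \<longlonglongrightarrow> l"
  have "\<forall>n. \<exists>t. x n = E t"
    using range by blast
  then obtain T where T: "\<And>n. x n = E (T n)"
    by metis
  have "Cauchy T"
  proof (rule metric_CauchyI)
    fix r :: real assume "r > 0"
    then obtain M where M: "\<forall>m\<ge>M. \<forall>n\<ge>M. dist (x m) (x n) < e * r"
      using metric_CauchyD[OF LIMSEQ_imp_Cauchy[OF lim], of "e * r"] \<open>e > 0\<close> by auto
    have "dist (T m) (T n) < r" if "M \<le> m" "M \<le> n" for m n
    proof -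
      have "e * dist (T m) (T n) \<le> dist (x m) (x n)"
        using expanding T by simp
      also have "\<dots> < e * r"
        using M that by simp
      finally have "e * dist (T m) (T n) < e * r" .
      then show ?thesis
        using \<open>e > 0\<close> by simp
    qed
    then show "\<exists>M. \<forall>m\<ge>M. \<forall>n\<ge>M. dist (T m) (T n) < r" by blast
  qed
  then obtain L where "T \<longlonglongrightarrow> L"
    using convergent_def Cauchy_convergent by blast
  then have "(\<lambda>n. E (T n)) \<longlonglongrightarrow> E L"
    by (rule continuous_on_tendsto_compose[OF cont]) auto
  moreover have "x = (\<lambda>n. E (T n))"
    using T by blast
  ultimately have "x \<longlonglongrightarrow> E L"
    by simp
  then show "l \<in> range E"
    using LIMSEQ_unique[OF lim] by simp
qed

lemma monotone_plus_scaled_identity_surj: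
  fixes D :: "'a::euclidean_space \<Rightarrow> 'a"
  assumes cont: "continuous_on UNIV D"
    and mono: "\<And>x y. 0 \<le> (D x - D y) \<bullet> (x - y)" and "e > 0"
  shows "surj (\<lambda>T. D T + e *\<^sub>R T)"
proof -
  define E where "E = (\<lambda>T. D T + e *\<^sub>R T)"
  have expanding: "e * dist x y \<le> dist (E x) (E y)" for x y
  proof -
    have "e * (norm (x - y))\<^sup>2 \<le> (E x - E y) \<bullet> (x - y)"
      using mono[of x y] by (simp add: E_def algebra_simps power2_norm_eq_inner)
    also have "\<dots> \<le> norm (E x - E y) * norm (x - y)"
      by (rule norm_cauchy_schwarz)
    finally show ?thesis
      by (cases "x = y") (auto simp: dist_norm power2_eq_square)
  qed
  have "inj E"
  proof (rule injI)
    fix x y assume "E x = E y"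
    then have "e * dist x y \<le> 0" using expanding[of x y] by simp
    then show "x = y" using \<open>e > 0\<close> by (simp add: mult_le_0_iff)
  qed
  have "continuous_on UNIV E"
    unfolding E_def by (intro continuous_intros cont)
  then have "open (range E)" "closed (range E)"
    using invariance_of_domain[of UNIV E] \<open>inj E\<close> closed_range_if_expanding \<open>e > 0\<close> expanding
    by (auto simp: inj_on_def inj_def)
  then show ?thesis
    using clopen[of "range E"] by (auto simp: E_def)
qed

lemma le_add_sqrt_if_square_le:
  fixes a c :: real
  assumes "0 \<le> a" "0 \<le> c" "a\<^sup>2 \<le> c * (1 + a)"
  shows "a \<le> c + sqrt c"
proof (rule ccontr)
  define s where "s = sqrt c"
  assume "\<not> ?thesis"
  then have a: "c + s < a" by (simp add: s_def)
  have s: "0 \<le> s" "s * s = c" using assms(2) by (simp_all add: s_def)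
  have "c \<le> (c + s) * s"
    using s assms(2) by (simp add: algebra_simps)
  also have "\<dots> \<le> a * s"
    using a s by (intro mult_right_mono) auto
  finally have "c + c * a \<le> a * c + a * s"
    by (simp add: algebra_simps)
  also have "\<dots> < a * a"
    using a s assms(2) by (simp add: distrib_left[symmetric] mult_strict_left_mono)
  finally show False
    using assms(3) by (simp add: power2_eq_square algebra_simps)
qed

lemma convex_combination_in_closure_range_monotone:
  fixes D :: "'a::euclidean_space \<Rightarrow> 'a"
  assumes cont: "continuous_on UNIV D"
    and mono: "\<And>x y. 0 \<le> (D x - D y) \<bullet> (x - y)"
    and u: "0 \<le> u" "u \<le> 1"
  shows "u *\<^sub>R D T1 + (1 - u) *\<^sub>R D T2 \<in> closure (range D)"
  unfolding closure_approachable
proof (intro allI impI)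
  fix \<eta> :: real assume "\<eta> > 0"
  define B where "B = u *\<^sub>R D T1 + (1 - u) *\<^sub>R D T2"
  define Tb where "Tb = u *\<^sub>R T1 + (1 - u) *\<^sub>R T2"
  define K where "K = - (u *\<^sub>R (B - D T1) \<bullet> T1) - ((1 - u) *\<^sub>R (B - D T2) \<bullet> T2)"
  define M where "M = \<bar>K\<bar> + norm Tb + 1"
  have M: "M > 0" "K \<le> M" "norm Tb \<le> M"
    unfolding M_def using abs_ge_zero[of K] norm_ge_zero[of Tb] by linarith+
  define c where "c = min (\<eta> / 2) (\<eta>\<^sup>2 / 16)"
  have c: "0 < c" "c + sqrt c < \<eta>"
  proof -
    have "sqrt c \<le> sqrt (\<eta>\<^sup>2 / 16)" unfolding c_def by simp
    also have "\<dots> = \<eta> / 4" using \<open>\<eta> > 0\<close> by (simp add: real_sqrt_divide)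
    finally show "c + sqrt c < \<eta>" using \<open>\<eta> > 0\<close> by (simp add: c_def)
  qed (use \<open>\<eta> > 0\<close> in \<open>simp add: c_def\<close>)
  define e where "e = c / M"
  have "e > 0" "e * M = c" using c M by (simp_all add: e_def)
  then obtain T where T: "D T + e *\<^sub>R T = B"
    using surjD[OF monotone_plus_scaled_identity_surj[OF cont mono \<open>e > 0\<close>]] by metis
  \<comment> \<open>Adding the monotonicity inequalities for \<open>T\<close> against \<open>T1\<close>, \<open>T2\<close> with weights \<open>u\<close>, \<open>1 - u\<close>,
    the \<open>B\<close>-terms add up to the constant \<open>K\<close>; hence \<open>e |T|\<^sup>2 = O(1 + |T|)\<close>.\<close>
  have "0 \<le> u * ((B - e *\<^sub>R T - D T1) \<bullet> (T - T1)) + (1 - u) * ((B - e *\<^sub>R T - D T2) \<bullet> (T - T2))"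
    using mono[of T T1] mono[of T T2] u T[symmetric] by simp
  also have "\<dots> = K - e * ((norm T)\<^sup>2 - T \<bullet> Tb)"
    unfolding K_def Tb_def B_def
    by (simp add: algebra_simps power2_norm_eq_inner)
  finally have "e * (norm T)\<^sup>2 \<le> K + e * (T \<bullet> Tb)" by (simp add: algebra_simps)
  also have "\<dots> \<le> M + e * (norm T * M)"
  proof -
    have "T \<bullet> Tb \<le> norm T * M"
      using norm_cauchy_schwarz[of T Tb] mult_left_mono[OF M(3) norm_ge_zero[of T]] by linarith
    then have "e * (T \<bullet> Tb) \<le> e * (norm T * M)"
      using \<open>e > 0\<close> by (intro mult_left_mono) auto
    then show ?thesis
      using M(2) by linarith
  qed
  finally have "e * (e * (norm T)\<^sup>2) \<le> e * (M + e * (norm T * M))"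
    using \<open>e > 0\<close> by (intro mult_left_mono) auto
  also have "e * (M + e * (norm T * M)) = (e * M) * (1 + e * norm T)"
    by (simp add: algebra_simps)
  finally have "e * (e * (norm T)\<^sup>2) \<le> c * (1 + e * norm T)"
    unfolding \<open>e * M = c\<close> .
  then have "(e * norm T)\<^sup>2 \<le> c * (1 + e * norm T)"
    by (simp add: power_mult_distrib power2_eq_square[of e] mult.assoc)
  then have "e * norm T \<le> c + sqrt c"
    using c \<open>e > 0\<close> by (intro le_add_sqrt_if_square_le) auto
  moreover have "dist (D T) B = e * norm T"
    using T[symmetric] \<open>e > 0\<close> by (simp add: dist_norm)
  ultimately have "dist (D T) B < \<eta>"
    using c by linarith
  then show "\<exists>y\<in>range D. dist y (u *\<^sub>R D T1 + (1 - u) *\<^sub>R D T2) < \<eta>"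
    unfolding B_def by blast
qed

lemma convex_closure_range_monotone:
  fixes D :: "'a::euclidean_space \<Rightarrow> 'a"
  assumes cont: "continuous_on UNIV D"
    and mono: "\<And>x y. 0 \<le> (D x - D y) \<bullet> (x - y)"
  shows "convex (closure (range D))"
  unfolding convex_alt
proof clarify
  fix x y and u :: real
  assume "x \<in> closure (range D)" "y \<in> closure (range D)" "0 \<le> u" "u \<le> 1"
  define comb where "comb = (\<lambda>p :: 'a \<times> 'a. (1 - u) *\<^sub>R fst p + u *\<^sub>R snd p)"
  have "comb ` (range D \<times> range D) \<subseteq> closure (range D)"
    using convex_combination_in_closure_range_monotone[OF cont mono, of "1 - u"] \<open>0 \<le> u\<close> \<open>u \<le> 1\<close>
    by (auto simp: comb_def)
  moreover have "continuous_on (closure (range D \<times> range D)) comb"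
    unfolding comb_def by (intro continuous_intros)
  ultimately have "comb ` closure (range D \<times> range D) \<subseteq> closure (range D)"
    by (intro image_closure_subset) auto
  moreover have "(x, y) \<in> closure (range D \<times> range D)"
    using \<open>x \<in> _\<close> \<open>y \<in> _\<close> by (simp add: closure_Times)
  ultimately show "(1 - u) *\<^sub>R x + u *\<^sub>R y \<in> closure (range D)"
    by (auto simp: comb_def)
qed

lemma has_derivative_radial_potential:
  fixes D :: "'a::{real_inner, banach} \<Rightarrow> 'a" and D' :: "'a \<Rightarrow> 'a \<Rightarrow>\<^sub>L 'a"
  assumes der: "\<And>x. (D has_derivative blinfun_apply (D' x)) (at x)"
    and cont: "continuous_on UNIV D'"
    and sym: "\<And>T X Y. D' T X \<bullet> Y = D' T Y \<bullet> X"
  shows "((\<lambda>T. integral {0..1} (\<lambda>t. D (t *\<^sub>R T) \<bullet> T)) has_derivative (\<lambda>H. D T \<bullet> H)) (at T)"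
proof -
  have contD: "continuous_on UNIV D"
    using der by (rule has_derivative_continuous_on)
  define integrand_deriv where
    "integrand_deriv x t = t *\<^sub>R (blinfun_inner_left x o\<^sub>L D' (t *\<^sub>R x)) + blinfun_inner_left (D (t *\<^sub>R x))"
    for x and t :: real
  have integrand_deriv_apply:
    "blinfun_apply (integrand_deriv x t) = (\<lambda>H. D (t *\<^sub>R x) \<bullet> H + t * (D' (t *\<^sub>R x) H \<bullet> x))" for x t
    by (auto simp: integrand_deriv_def blinfun.add_left blinfun.scaleR_left inner_commute)
  have integrand_has_derivative:
    "((\<lambda>x. D (t *\<^sub>R x) \<bullet> x) has_derivative integrand_deriv x t) (at x within UNIV)" for x t
  proof -
    have "((\<lambda>x. D (t *\<^sub>R x)) has_derivative (\<lambda>H. D' (t *\<^sub>R x) (t *\<^sub>R H))) (at x)"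
      by (rule has_derivative_compose[OF _ der]) (auto intro!: derivative_eq_intros)
    then have "((\<lambda>x. D (t *\<^sub>R x) \<bullet> x) has_derivative
        (\<lambda>H. D (t *\<^sub>R x) \<bullet> H + D' (t *\<^sub>R x) (t *\<^sub>R H) \<bullet> x)) (at x)"
      by (auto intro!: derivative_eq_intros)
    then show ?thesis
      by (simp add: integrand_deriv_apply blinfun.scaleR_right)
  qed
  have integrand_deriv_cont: "continuous_on (UNIV \<times> cbox 0 1) (\<lambda>(x, t). integrand_deriv x t)"
    unfolding integrand_deriv_def split_beta
    by (intro continuous_intros continuous_on_compose2[OF cont _ subset_UNIV]
        continuous_on_compose2[OF contD _ subset_UNIV])
  have "(\<lambda>t. D (t *\<^sub>R x) \<bullet> x) integrable_on cbox 0 1" for x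
    by (intro integrable_continuous continuous_intros continuous_on_compose2[OF contD _ subset_UNIV])
  from leibniz_rule[OF integrand_has_derivative this integrand_deriv_cont UNIV_I convex_UNIV]
  have "((\<lambda>T. integral {0..1} (\<lambda>t. D (t *\<^sub>R T) \<bullet> T)) has_derivative integral {0..1} (integrand_deriv T))
      (at T)"
    by simp
  moreover have "blinfun_apply (integral {0..1} (integrand_deriv T)) = (\<lambda>H. D T \<bullet> H)"
  proof
    fix H
    have "((\<lambda>t. t * (D (0 + t *\<^sub>R T) \<bullet> H)) has_real_derivative integrand_deriv T t H)
        (at t within {0..1})" for t
      using has_real_derivative_inner_along_line[OF der, where X=0 and V=T and W=H]
      by (auto intro!: derivative_eq_intros simp: integrand_deriv_apply sym)
    then have "((\<lambda>t. integrand_deriv T t H) has_integral D T \<bullet> H) {0..1}"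
      using fundamental_theorem_of_calculus[of 0 1 "\<lambda>t. t * (D (0 + t *\<^sub>R T) \<bullet> H)" "\<lambda>t. integrand_deriv T t H"]
      by (simp add: has_real_derivative_iff_has_vector_derivative)
    moreover have "integrand_deriv T integrable_on {0..1}"
      unfolding integrand_deriv_def
      by (intro integrable_continuous_real continuous_intros continuous_on_compose2[OF cont _ subset_UNIV]
          continuous_on_compose2[OF contD _ subset_UNIV])
    ultimately show "integral {0..1} (integrand_deriv T) H = D T \<bullet> H"
      by (simp add: blinfun_apply_integral integral_unique)
  qed
  ultimately show ?thesis
    by simp
qed

lemma continuous_attains_global_min_if_coercive:
  fixes G :: "'a::{real_normed_vector, heine_borel} \<Rightarrow> real"
  assumes cont: "continuous_on UNIV G" and far: "\<And>T. R < norm T \<Longrightarrow> G 0 < G T"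
  obtains Ts where "\<And>T. G Ts \<le> G T"
proof -
  have "R \<ge> 0"
    using far[of 0] by force
  then have "cball 0 R \<noteq> {}"
    by simp
  then obtain Ts where Ts: "Ts \<in> cball 0 R" "\<And>T. T \<in> cball 0 R \<Longrightarrow> G Ts \<le> G T"
    using continuous_attains_inf[OF compact_cball _ continuous_on_subset[OF cont subset_UNIV]] by blast
  have "G Ts \<le> G 0"
    using Ts(2) \<open>R \<ge> 0\<close> by simp
  then have "G Ts \<le> G T" for T
    using Ts(2)[of T] far[of T] by (cases "T \<in> cball 0 R") auto
  then show ?thesis by (rule that)
qed

locale strongly_monotone_gradient =
  fixes F :: "'a::euclidean_space \<Rightarrow> real" and D :: "'a \<Rightarrow> 'a" and h :: "real \<Rightarrow> real"
  assumes gradient: "\<And>T. (F has_derivative (\<lambda>H. D T \<bullet> H)) (at T)"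
    and continuous_D: "continuous_on UNIV D"
    and h_pos: "\<And>t. 0 \<le> t \<Longrightarrow> 0 < h t"
    and h_antimono: "\<And>s t. 0 \<le> s \<Longrightarrow> s \<le> t \<Longrightarrow> h t \<le> h s"
    and strongly_monotone: "\<And>T1 T2. h (norm T1 + norm T2) * (norm (T1 - T2))\<^sup>2 \<le> (D T1 - D T2) \<bullet> (T1 - T2)"
begin

abbreviation conjugate :: "'a \<Rightarrow> ereal" where
  "conjugate B \<equiv> SUP T. ereal (B \<bullet> T - F T)"

lemma strictly_monotone: "T1 \<noteq> T2 \<Longrightarrow> 0 < (D T1 - D T2) \<bullet> (T1 - T2)"
  using h_pos[of "norm T1 + norm T2"] by (intro order_less_le_trans[OF _ strongly_monotone]) simp

lemma monotone_D: "0 \<le> (D T1 - D T2) \<bullet> (T1 - T2)"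
  using strictly_monotone[of T1 T2] by (cases "T1 = T2") auto

lemma inj_D: "inj D"
proof (rule injI, rule ccontr)
  fix x y assume "D x = D y" "x \<noteq> y"
  then show False
    using strictly_monotone[of x y] by simp
qed

lemma open_range_D: "open (range D)"
  using invariance_of_domain[OF continuous_D open_UNIV] inj_D by (auto simp: inj_def)

lemma continuous_F: "continuous_on UNIV F"
  by (intro continuous_at_imp_continuous_on ballI has_derivative_continuous[OF gradient])

lemma has_real_derivative_along_line:
  "((\<lambda>s. F (X + s *\<^sub>R V)) has_real_derivative D (X + s *\<^sub>R V) \<bullet> V) (at s within S)"
proof -
  have "((\<lambda>s. F (X + s *\<^sub>R V)) has_derivative (\<lambda>r. D (X + s *\<^sub>R V) \<bullet> (r *\<^sub>R V))) (at s within S)"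
    by (rule has_derivative_compose[OF _ gradient]) (auto intro!: derivative_eq_intros)
  then show ?thesis
    by (simp add: has_field_derivative_def mult_commute_abs)
qed

lemma first_order_strict:
  assumes "Y \<noteq> X"
  shows "F X + D X \<bullet> (Y - X) < F Y"
proof -
  define V where "V = Y - X"
  obtain z where z: "0 < z" "z < 1"
    and mvt: "F (X + 1 *\<^sub>R V) - F (X + 0 *\<^sub>R V) = (1 - 0) * (D (X + z *\<^sub>R V) \<bullet> V)"
    using MVT2[of 0 1 "\<lambda>s. F (X + s *\<^sub>R V)" "\<lambda>s. D (X + s *\<^sub>R V) \<bullet> V"] has_real_derivative_along_line
    by fastforce
  have "0 < (D (X + z *\<^sub>R V) - D X) \<bullet> ((X + z *\<^sub>R V) - X)"
    using z assms by (intro strictly_monotone) (simp add: V_def)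
  then have "0 < (D (X + z *\<^sub>R V) - D X) \<bullet> V"
    using z by (simp add: zero_less_mult_iff)
  then show ?thesis
    using mvt by (simp add: V_def inner_diff_left)
qed

lemma first_order: "F X + D X \<bullet> (Y - X) \<le> F Y"
  using first_order_strict[of Y X] by (cases "Y = X") auto

lemma strictly_convex: "strictly_convex_on UNIV F"
  unfolding strictly_convex_on_def
proof (intro conjI convex_UNIV ballI impI allI)
  fix x y :: 'a and u :: real
  assume "x \<noteq> y" and u: "0 < u \<and> u < 1"
  define z where "z = u *\<^sub>R x + (1 - u) *\<^sub>R y"
  have xz: "x - z = (1 - u) *\<^sub>R (x - y)" and yz: "y - z = (- u) *\<^sub>R (x - y)"
    by (simp_all add: z_def algebra_simps)
  then have "x \<noteq> z" "y \<noteq> z"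
    using u \<open>x \<noteq> y\<close> by auto
  then have "u * (F z + D z \<bullet> (x - z)) + (1 - u) * (F z + D z \<bullet> (y - z)) < u * F x + (1 - u) * F y"
    using first_order_strict u by (intro add_strict_mono mult_strict_left_mono) auto
  moreover have "u * (F z + D z \<bullet> (x - z)) + (1 - u) * (F z + D z \<bullet> (y - z)) = F z"
    unfolding xz yz by (simp add: algebra_simps)
  ultimately show "F (u *\<^sub>R x + (1 - u) *\<^sub>R y) < u * F x + (1 - u) * F y"
    by (simp add: z_def)
qed

lemma conjugate_max_strict: "T \<noteq> T0 \<Longrightarrow> D T0 \<bullet> T - F T < D T0 \<bullet> T0 - F T0"
  using first_order_strict[of T T0] by (simp add: inner_diff_right)

lemma conjugate_max: "D T0 \<bullet> T - F T \<le> D T0 \<bullet> T0 - F T0"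
  using first_order[of T0 T] by (simp add: inner_diff_right)

lemma conjugate_gradient: "conjugate (D T0) = ereal (D T0 \<bullet> T0 - F T0)"
  by (intro antisym SUP_least SUP_upper2[of T0]) (auto simp: conjugate_max)

lemma conjugate_outside_closure_range:
  assumes "B \<notin> closure (range D)"
  shows "conjugate B = \<infinity>"
proof -
  obtain a b where ab: "a \<bullet> B < b" "\<And>x. x \<in> closure (range D) \<Longrightarrow> b < a \<bullet> x"
    using separating_hyperplane_closed_point[OF convex_closure_range_monotone[OF continuous_D monotone_D]
        closed_closure assms] by blast
  \<comment> \<open>Along the ray \<open>s \<mapsto> -s a\<close> the slope of \<open>F\<close> stays below \<open>-b\<close>, while \<open>B \<bullet> (-s a)\<close> grows faster.\<close>
  have ray: "F (s *\<^sub>R - a) \<le> F 0 - s * b" if "0 \<le> s" for s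
  proof -
    have "b < a \<bullet> D (s *\<^sub>R - a)"
      by (rule ab(2)[OF closure_subset[THEN subsetD]]) simp
    then have "s * b \<le> s * (a \<bullet> D (s *\<^sub>R - a))"
      using that by (intro mult_left_mono) auto
    then show ?thesis
      using first_order[of "s *\<^sub>R - a" 0] by (simp add: inner_commute)
  qed
  have "\<exists>T. ereal (real n) \<le> ereal (B \<bullet> T - F T)" for n :: nat
  proof
    define s where "s = (real n + \<bar>F 0\<bar>) / (b - a \<bullet> B)"
    have "0 \<le> s" "s * (b - a \<bullet> B) = real n + \<bar>F 0\<bar>"
      using ab(1) by (simp_all add: s_def)
    then show "ereal (real n) \<le> ereal (B \<bullet> (s *\<^sub>R - a) - F (s *\<^sub>R - a))"
      using ray[of s] by (simp add: algebra_simps inner_commute)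
  qed
  then show ?thesis
    by (intro SUP_PInfty) auto
qed

lemma linear_growth:
  "F X - D X \<bullet> X + h (2 * norm X + 1) * (norm (T - X) - 1) \<le> F T - D X \<bullet> T"
proof (cases "norm (T - X) \<le> 1")
  case True
  then have "h (2 * norm X + 1) * (norm (T - X) - 1) \<le> 0"
    using h_pos[of "2 * norm X + 1"] by (simp add: mult_nonneg_nonpos)
  then show ?thesis
    using first_order[of X T] by (simp add: inner_diff_right)
next
  case False
  define r where "r = norm (T - X)"
  define w where "w = (1 / r) *\<^sub>R (T - X)"
  have "r > 1" "norm w = 1"
    using False by (auto simp: r_def w_def)
  define A where "A = X + w"
  have "T - A = (1 - 1 / r) *\<^sub>R (T - X)"
    by (simp add: A_def w_def algebra_simps)
  also have "\<dots> = (r - 1) *\<^sub>R w"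
    using \<open>r > 1\<close> by (simp add: w_def field_simps)
  finally have TA: "T - A = (r - 1) *\<^sub>R w" .
  \<comment> \<open>Strong monotonicity on the unit segment from \<open>X\<close> to \<open>A\<close> gives the slope \<open>h (2 |X| + 1)\<close>,
    and by convexity \<open>F\<close> keeps growing at least this fast beyond \<open>A\<close>.\<close>
  have "h (2 * norm X + 1) \<le> h (norm A + norm X)"
    using norm_triangle_ineq[of X w] \<open>norm w = 1\<close> by (intro h_antimono) (auto simp: A_def)
  also have "\<dots> \<le> (D A - D X) \<bullet> w"
    using strongly_monotone[of A X] \<open>norm w = 1\<close> by (simp add: A_def)
  finally have "(r - 1) * h (2 * norm X + 1) \<le> (D A - D X) \<bullet> (T - A)"
    using \<open>r > 1\<close> by (simp add: TA)
  then show ?thesis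
    using first_order[of A T] first_order[of X A]
    by (simp add: r_def algebra_simps)
qed

lemma tilted_coercive:
  obtains R where "\<And>T. R < norm T \<Longrightarrow> y < F T - D X \<bullet> T"
proof
  define k where "k = h (2 * norm X + 1)"
  define c where "c = F X - D X \<bullet> X"
  have "k > 0"
    unfolding k_def by (intro h_pos) simp
  fix T :: 'a assume "norm X + 1 + \<bar>y - c\<bar> / k < norm T"
  then have "\<bar>y - c\<bar> / k < norm (T - X) - 1"
    using norm_triangle_ineq2[of T X] by linarith
  then have "y - c < k * (norm (T - X) - 1)"
    using \<open>k > 0\<close> by (simp add: field_simps)
  then show "y < F T - D X \<bullet> T"
    using linear_growth[of X T] by (simp add: k_def c_def)
qed

lemma gradient_eq_if_minimizer:
  assumes min: "\<And>T. F Ts - B \<bullet> Ts \<le> F T - B \<bullet> T"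
  shows "D Ts = B"
proof -
  have "((\<lambda>T. F T - B \<bullet> T) has_derivative (\<lambda>H. D Ts \<bullet> H - B \<bullet> H)) (at Ts)"
    by (auto intro!: derivative_eq_intros gradient)
  then have "(\<lambda>H. D Ts \<bullet> H - B \<bullet> H) = (\<lambda>H. 0)"
    by (rule has_derivative_local_min) (use min in auto)
  then have "(D Ts - B) \<bullet> (D Ts - B) = 0"
    by (metis inner_diff_left)
  then show ?thesis by simp
qed

lemma convex_range: "convex (range D)"
  unfolding convex_alt
proof clarify
  fix T1 T2 and u :: real assume u: "0 \<le> u" "u \<le> 1"
  define B where "B = (1 - u) *\<^sub>R D T1 + u *\<^sub>R D T2"
  define G where "G T = F T - B \<bullet> T" for T
  have G_split: "G T = (1 - u) * (F T - D T1 \<bullet> T) + u * (F T - D T2 \<bullet> T)" for T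
    by (simp add: G_def B_def algebra_simps)
  obtain R1 R2 where R: "\<And>T. R1 < norm T \<Longrightarrow> G 0 < F T - D T1 \<bullet> T"
    "\<And>T. R2 < norm T \<Longrightarrow> G 0 < F T - D T2 \<bullet> T"
    using tilted_coercive by metis
  have "G 0 < G T" if "max R1 R2 < norm T" for T
  proof -
    have "G 0 < F T - D T1 \<bullet> T" "G 0 < F T - D T2 \<bullet> T"
      using R that by auto
    then have "0 < (1 - u) * (F T - D T1 \<bullet> T - G 0) + u * (F T - D T2 \<bullet> T - G 0)"
      using u by (cases "u = 0") (auto intro!: add_nonneg_pos mult_pos_pos)
    then show ?thesis
      by (simp add: G_split[of T] algebra_simps)
  qed
  moreover have "continuous_on UNIV G"
    unfolding G_def by (intro continuous_intros continuous_F)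
  ultimately obtain Ts where "\<And>T. G Ts \<le> G T"
    using continuous_attains_global_min_if_coercive by blast
  then have "D Ts = B"
    by (intro gradient_eq_if_minimizer) (simp add: G_def)
  then show "(1 - u) *\<^sub>R D T1 + u *\<^sub>R D T2 \<in> range D"
    unfolding B_def by (metis rangeI)
qed


lemma conjugate_range:
  assumes "B \<in> range D"
  shows "conjugate B = ereal (B \<bullet> inv D B - F (inv D B))"
  using conjugate_gradient[of "inv D B"] assms by (simp add: f_inv_into_f)

lemma conjugate_strictly_convex: "strictly_convex_on_ereal (range D) conjugate"
  unfolding strictly_convex_on_ereal_def
proof (intro ballI impI allI)
  fix X Y and u :: real
  assume "X \<in> range D" "Y \<in> range D" "X \<noteq> Y" and u: "0 < u \<and> u < 1"
  then obtain T1 T2 where T12: "X = D T1" "Y = D T2" "T1 \<noteq> T2"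
    by blast
  have "u *\<^sub>R X + (1 - u) *\<^sub>R Y \<in> range D"
    using convex_range \<open>X \<in> range D\<close> \<open>Y \<in> range D\<close> u unfolding convex_def by auto
  then obtain T where T: "u *\<^sub>R X + (1 - u) *\<^sub>R Y = D T"
    by blast
  have "u * (X \<bullet> T - F T) + (1 - u) * (Y \<bullet> T - F T) < u * (X \<bullet> T1 - F T1) + (1 - u) * (Y \<bullet> T2 - F T2)"
  proof (cases "T = T1")
    case True
    then have "T \<noteq> T2" using T12 by simp
    then show ?thesis
      using u T12 conjugate_max[of T1 T] conjugate_max_strict[of T T2]
      by (intro add_le_less_mono mult_left_mono mult_strict_left_mono) auto
  next
    case False
    then show ?thesis
      using u T12 conjugate_max_strict[of T T1] conjugate_max[of T2 T]
      by (intro add_less_le_mono mult_left_mono mult_strict_left_mono) auto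
  qed
  moreover have "u * (X \<bullet> T - F T) + (1 - u) * (Y \<bullet> T - F T) = D T \<bullet> T - F T"
    unfolding T[symmetric] by (simp add: algebra_simps)
  ultimately show "conjugate (u *\<^sub>R X + (1 - u) *\<^sub>R Y) < ereal u * conjugate X + ereal (1 - u) * conjugate Y"
    unfolding T by (simp add: T12 conjugate_gradient)
qed

lemma conjugate_remainder_bounds:
  "0 \<le> (D T \<bullet> T - F T) - (D T0 \<bullet> T0 - F T0) - T0 \<bullet> (D T - D T0)"
  "(D T \<bullet> T - F T) - (D T0 \<bullet> T0 - F T0) - T0 \<bullet> (D T - D T0) \<le> (T - T0) \<bullet> (D T - D T0)"
  using conjugate_max[of T T0] conjugate_max[of T0 T]
  by (simp_all add: inner_diff_left inner_diff_right inner_commute[of T0] inner_commute[of T])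

lemma isCont_inv_D: "B \<in> range D \<Longrightarrow> isCont (inv D) B"
proof -
  have "continuous_on (range D) (inv D)"
    using inj_D by (intro continuous_on_inverse_open[OF open_UNIV continuous_D]) auto
  then show "B \<in> range D \<Longrightarrow> isCont (inv D) B"
    using open_range_D continuous_on_eq_continuous_at by blast
qed

lemma has_derivative_conjugate:
  assumes "B \<in> range D"
  shows "((\<lambda>X. real_of_ereal (conjugate X)) has_derivative (\<lambda>H. inv D B \<bullet> H)) (at B)"
proof -
  define c where "c X = real_of_ereal (conjugate X)" for X
  define T0 where "T0 = inv D B"
  define r where "r X = c X - c B - T0 \<bullet> (X - B)" for X
  have B: "B = D T0"
    using assms by (simp add: T0_def f_inv_into_f)
  \<comment> \<open>The remainder is squeezed between the two first-order inequalities at \<open>T\<close> and \<open>T0\<close>.\<close>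
  have bound: "\<bar>r X\<bar> / norm (X - B) \<le> norm (inv D X - T0)" if "X \<in> range D" for X
  proof -
    define T where "T = inv D X"
    have X: "X = D T"
      using that by (simp add: T_def f_inv_into_f)
    have "r X = (D T \<bullet> T - F T) - (D T0 \<bullet> T0 - F T0) - T0 \<bullet> (D T - D T0)"
      by (simp add: r_def c_def X B conjugate_gradient)
    then have "0 \<le> r X" "r X \<le> (T - T0) \<bullet> (X - B)"
      using conjugate_remainder_bounds[of T T0] by (simp_all add: X B)
    then have "\<bar>r X\<bar> \<le> norm (T - T0) * norm (X - B)"
      using norm_cauchy_schwarz[of "T - T0" "X - B"] by simp
    then show ?thesis
      by (simp add: divide_le_eq T_def mult.commute)
  qed
  have "((\<lambda>X. norm (inv D X - T0)) \<longlongrightarrow> 0) (at B)"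
    using isCont_inv_D[OF assms] unfolding T0_def isCont_def by (intro tendsto_norm_zero) (simp add: LIM_zero)
  moreover have "eventually (\<lambda>X. norm (\<bar>r X\<bar> / norm (X - B)) \<le> norm (inv D X - T0)) (at B)"
    using eventually_at_in_open'[OF open_range_D assms] by (rule eventually_mono) (simp add: bound)
  ultimately have "((\<lambda>X. \<bar>r X\<bar> / norm (X - B)) \<longlongrightarrow> 0) (at B)"
    by (rule Lim_null_comparison[rotated])
  then show ?thesis
    unfolding has_derivative_iff_norm real_norm_def r_def c_def T0_def
    by (simp add: bounded_linear_inner_right)
qed

end


theorem lemmaA1:
  fixes D :: "real^'N::finite^'d::finite \<Rightarrow> real^'N^'d"
    and h :: "real \<Rightarrow> real"
    and C0 C1 C2 :: real
  assumes C1D: "C1_map D"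
    and C0: "C0 \<ge> 0" and C1: "C1 > 0" and C2: "C2 > 0"
    and coerc: "\<And>T. D T \<bullet> T \<ge> C1 * norm T - C0"
    and hpos: "\<And>t. t \<ge> 0 \<Longrightarrow> h t > 0"
    and hmono: "\<And>s t. 0 \<le> s \<Longrightarrow> s \<le> t \<Longrightarrow> h t \<le> h s"
    and hcont: "continuous_on {0..} h"
    and ellip: "\<And>T B. h (norm T) * (norm B)\<^sup>2
                  \<le> (\<Sum>i\<in>UNIV. \<Sum>\<nu>\<in>UNIV. \<Sum>j\<in>UNIV. \<Sum>\<mu>\<in>UNIV. pdA D i \<nu> j \<mu> T * B $ i $ \<nu> * B $ j $ \<mu>)"
    and bound: "\<And>T B. (\<Sum>i\<in>UNIV. \<Sum>\<nu>\<in>UNIV. \<Sum>j\<in>UNIV. \<Sum>\<mu>\<in>UNIV. pdA D i \<nu> j \<mu> T * B $ i $ \<nu> * B $ j $ \<mu>)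
                  \<le> C2 * (norm B)\<^sup>2 / (1 + norm T)"
  shows "(\<forall>T1 T2. (D T1 - D T2) \<bullet> (T1 - T2) \<ge> h (norm T1 + norm T2) * (norm (T1 - T2))\<^sup>2)
       \<and> convex (closure (range D))
       \<and> ((\<forall>T i \<nu> j \<mu>. pdA D i \<nu> j \<mu> T = pdA D j \<mu> i \<nu> T) \<longrightarrow>
            (\<forall>T. (potF D has_derivative (\<lambda>H. D T \<bullet> H)) (at T))
          \<and> strictly_convex_on UNIV (potF D)
          \<and> strictly_convex_on_ereal (range D) (conjF (potF D))
          \<and> (\<forall>B. B \<notin> closure (range D) \<longrightarrow> conjF (potF D) B = \<infinity>)
          \<and> (\<forall>B\<in>range D. conjF (potF D) B = ereal (B \<bullet> inv D B - potF D (inv D B)))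
          \<and> (\<forall>B\<in>range D. ((\<lambda>X. real_of_ereal (conjF (potF D) X)) has_derivative (\<lambda>H. inv D B \<bullet> H)) (at B)))"
proof -
  obtain D' where der: "\<And>T. (D has_derivative blinfun_apply (D' T)) (at T)"
    and cont: "continuous_on UNIV D'"
    using C1D unfolding C1_map_def by blast
  have strong: "h (norm T1 + norm T2) * (norm (T1 - T2))\<^sup>2 \<le> (D T1 - D T2) \<bullet> (T1 - T2)" for T1 T2
    using ellip by (intro strongly_monotone_if_elliptic[OF der _ hmono]) (simp add: quadratic_form_pdA[OF der])
  have contD: "continuous_on UNIV D"
    using der by (rule has_derivative_continuous_on)
  have "0 \<le> (D T1 - D T2) \<bullet> (T1 - T2)" for T1 T2
    using hpos[of "norm T1 + norm T2"] by (intro order_trans[OF _ strong]) simp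
  with contD have "convex (closure (range D))"
    by (rule convex_closure_range_monotone)
  moreover have "(\<forall>T. (potF D has_derivative (\<lambda>H. D T \<bullet> H)) (at T))
          \<and> strictly_convex_on UNIV (potF D)
          \<and> strictly_convex_on_ereal (range D) (conjF (potF D))
          \<and> (\<forall>B. B \<notin> closure (range D) \<longrightarrow> conjF (potF D) B = \<infinity>)
          \<and> (\<forall>B\<in>range D. conjF (potF D) B = ereal (B \<bullet> inv D B - potF D (inv D B)))
          \<and> (\<forall>B\<in>range D. ((\<lambda>X. real_of_ereal (conjF (potF D) X)) has_derivative (\<lambda>H. inv D B \<bullet> H)) (at B))"
    if "\<forall>T i \<nu> j \<mu>. pdA D i \<nu> j \<mu> T = pdA D j \<mu> i \<nu> T"
  proof -
    have "(potF D has_derivative (\<lambda>H. D T \<bullet> H)) (at T)" for T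
      unfolding potF_def[abs_def] using der cont that
      by (intro has_derivative_radial_potential inner_symmetric_if_pdA_symmetric) auto
    then interpret strongly_monotone_gradient "potF D" D h
      using contD hpos hmono strong by unfold_locales
    have "conjF (potF D) = conjugate"
      by (simp add: conjF_def fun_eq_iff)
    then show ?thesis
      using gradient strictly_convex conjugate_strictly_convex conjugate_outside_closure_range
        conjugate_range has_derivative_conjugate by simp
  qed
  ultimately show ?thesis
    using strong by auto
qed

end
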